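(* Let $K\subset\mathbb{R}^n$ be a convex body with smooth boundary and let $\gamma:S^1\to\mathbb{R}^n$ be a piecewise linear closed curve. If there exists $\mathcal{N}\subset\mathbb{R}^n\setminus\{0\}$ such that $0\in\mathrm{conv}(\mathcal{N})$ and $h(K:\nu)\le h(\gamma(S^1):\nu)$ for every $\nu\in\mathcal{N}$, then $\gamma\in\mathcal{P}^+(K)$.
   Context: A convex body is a compact convex set with nonempty interior; $S^1=\mathbb{R}/\mathbb{Z}$. For compact $S\subset\mathbb{R}^n$ and $\nu\in\mathbb{R}^n$, $h(S:\nu)=\max\{s\cdot\nu:s\in S\}$. $\mathcal{P}^+(K)$ is the set of piecewise linear closed curves $\gamma:S^1\to\mathbb{R}^n$ such that $\gamma(S^1)+x\not\subset\mathrm{int}\,K$ for every $x\in\mathbb{R}^n$. $\mathrm{conv}$ denotes convex hull. *)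

theory Defs
  imports "HOL-Analysis.Analysis"
begin

definition convex_body :: "'a::euclidean_space set \<Rightarrow> bool" where
  "convex_body K \<longleftrightarrow> compact K \<and> convex K \<and> interior K \<noteq> {}"

fun Ck_on :: "nat \<Rightarrow> 'a::euclidean_space set \<Rightarrow> ('a \<Rightarrow> real) \<Rightarrow> bool" where
  "Ck_on 0 U f = continuous_on U f"
| "Ck_on (Suc k) U f =
     (\<exists>D. (\<forall>x\<in>U. (f has_derivative D x) (at x)) \<and> (\<forall>b\<in>Basis. Ck_on k U (\<lambda>x. D x b)))"

definition smooth_on :: "'a::euclidean_space set \<Rightarrow> ('a \<Rightarrow> real) \<Rightarrow> bool" where
  "smooth_on U f \<longleftrightarrow> (\<forall>k. Ck_on k U f)"

definition smooth_boundary :: "'a::euclidean_space set \<Rightarrow> bool" where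
  "smooth_boundary K \<longleftrightarrow>
     (\<forall>x\<in>frontier K. \<exists>U f D. open U \<and> x \<in> U \<and> smooth_on U f \<and>
        (f has_derivative D) (at x) \<and> D \<noteq> (\<lambda>h. 0) \<and>
        K \<inter> U = {y\<in>U. f y \<le> 0})"

text \<open>Closed curves S^1 = R/Z -> R^n are represented as 1-periodic maps
  real => 'a; the image gamma(S^1) is gamma ` {0..1}. Piecewise linear: there is a
  finite partition of [0,1] on whose consecutive pieces gamma is affine.\<close>
definition pl_closed_curve :: "(real \<Rightarrow> 'a::euclidean_space) \<Rightarrow> bool" where
  "pl_closed_curve \<gamma> \<longleftrightarrow>
     (\<forall>t. \<gamma> (t + 1) = \<gamma> t) \<and>
     (\<exists>S. finite S \<and> S \<subseteq> {0..1} \<and> 0 \<in> S \<and> 1 \<in> S \<and>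
        (\<forall>a\<in>S. \<forall>b\<in>S. a < b \<and> {a<..<b} \<inter> S = {} \<longrightarrow>
           (\<forall>t\<in>{a..b}. \<gamma> t = \<gamma> a + ((t - a) / (b - a)) *\<^sub>R (\<gamma> b - \<gamma> a))))"

definition curve_image :: "(real \<Rightarrow> 'a) \<Rightarrow> 'a set" where
  "curve_image \<gamma> = \<gamma> ` {0..1}"

definition support_fun :: "'a::euclidean_space set \<Rightarrow> 'a \<Rightarrow> real" where
  "support_fun S \<nu> = Sup ((\<lambda>s. s \<bullet> \<nu>) ` S)"

definition Pplus :: "'a::euclidean_space set \<Rightarrow> (real \<Rightarrow> 'a) set" where
  "Pplus K = {\<gamma>. pl_closed_curve \<gamma> \<and>
                  (\<forall>x. \<not> ((\<lambda>s. s + x) ` curve_image \<gamma> \<subseteq> interior K))}"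

end

theory Submission
  imports Defs
begin

text \<open>If a translate \<open>\<gamma>(S\<^sup>1) + x\<close> lay in the interior of \<open>K\<close>, then moving from a point of the
  curve maximising \<open>\<nu>\<close> a little further in direction \<open>\<nu>\<close> stays in \<open>K\<close>, so
  \<open>h(\<gamma>(S\<^sup>1):\<nu>) + x\<cdot>\<nu> < h(K:\<nu>)\<close> for every \<open>\<nu> \<noteq> 0\<close>. With the hypothesis this forces
  \<open>x\<cdot>\<nu> < 0\<close> on \<open>\<N>\<close>, hence on the convex hull of \<open>\<N>\<close>, which contains \<open>0\<close>.\<close>

lemma finite_gap_around:
  fixes S :: "real set"
  assumes "finite S" "a \<in> S" "b \<in> S" "a < t" "t < b"
  obtains l r where "l \<in> S" "r \<in> S" "l < t" "t < r" "{l<..<r} \<inter> S \<subseteq> {t}"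
proof -
  let ?below = "{s\<in>S. s < t}" and ?above = "{s\<in>S. t < s}"
  have below: "finite ?below" "?below \<noteq> {}" and above: "finite ?above" "?above \<noteq> {}"
    using assms by auto
  have "{Max ?below<..<Min ?above} \<inter> S \<subseteq> {t}"
  proof
    fix s assume s: "s \<in> {Max ?below<..<Min ?above} \<inter> S"
    have "\<not> s < t" using s Max_ge[OF below(1), of s] by auto
    moreover have "\<not> t < s" using s Min_le[OF above(1), of s] by auto
    ultimately show "s \<in> {t}" by simp
  qed
  then show thesis
    using that Max_in[OF below] Min_in[OF above] by auto
qed

lemma pl_closed_curve_continuous_on:
  assumes "pl_closed_curve \<gamma>"
  shows "continuous_on {0..1} \<gamma>"
proof -
  obtain S where S: "finite S" "S \<subseteq> {0..1}" "0 \<in> S" "1 \<in> S"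
    and affine: "\<forall>a\<in>S. \<forall>b\<in>S. a < b \<and> {a<..<b} \<inter> S = {} \<longrightarrow>
       (\<forall>t\<in>{a..b}. \<gamma> t = \<gamma> a + ((t - a) / (b - a)) *\<^sub>R (\<gamma> b - \<gamma> a))"
    using assms unfolding pl_closed_curve_def by blast
  \<comment> \<open>Degenerate pairs \<open>(s, s)\<close> are allowed so that the breakpoints themselves are covered.\<close>
  define pieces where "pieces = {p \<in> S \<times> S. fst p \<le> snd p \<and> {fst p<..<snd p} \<inter> S = {}}"
  have finite_pieces: "finite pieces"
    unfolding pieces_def using S(1) by simp
  have continuous_pieces: "continuous_on {fst p..snd p} \<gamma>" if "p \<in> pieces" for p
  proof (cases "fst p = snd p")
    case False
    with that have p: "fst p \<in> S" "snd p \<in> S" "fst p < snd p" "{fst p<..<snd p} \<inter> S = {}"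
      unfolding pieces_def by auto
    have cont: "continuous_on {fst p..snd p}
        (\<lambda>t. \<gamma> (fst p) + ((t - fst p) / (snd p - fst p)) *\<^sub>R (\<gamma> (snd p) - \<gamma> (fst p)))"
      by (intro continuous_intros) (use p(3) in auto)
    have eq: "\<gamma> t = \<gamma> (fst p) + ((t - fst p) / (snd p - fst p)) *\<^sub>R (\<gamma> (snd p) - \<gamma> (fst p))"
      if "t \<in> {fst p..snd p}" for t
      using affine[rule_format, OF p(1,2) conjI[OF p(3,4)] that] .
    show ?thesis
      using continuous_on_eq[OF cont eq[symmetric]] .
  qed simp
  have pieces_cover: "{0..1} = (\<Union>p\<in>pieces. {fst p..snd p})"
  proof
    have "{fst p..snd p} \<subseteq> {0..1}" if "p \<in> pieces" for p
    proof -
      have "fst p \<in> {0..1}" "snd p \<in> {0..1}"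
        using that S(2) unfolding pieces_def by auto
      then show ?thesis by auto
    qed
    then show "(\<Union>p\<in>pieces. {fst p..snd p}) \<subseteq> {0..1}" by blast
  next
    show "{0..1} \<subseteq> (\<Union>p\<in>pieces. {fst p..snd p})"
    proof
      fix t :: real assume t: "t \<in> {0..1}"
      show "t \<in> (\<Union>p\<in>pieces. {fst p..snd p})"
      proof (cases "t \<in> S")
        case True
        then have "(t, t) \<in> pieces" unfolding pieces_def by simp
        then show ?thesis by (rule UN_I) simp
      next
        case False
        with t S(3,4) have "0 < t" "t < 1" by (auto simp: less_le)
        then obtain l r where "l \<in> S" "r \<in> S" "l < t" "t < r" "{l<..<r} \<inter> S \<subseteq> {t}"
          using finite_gap_around[OF S(1,3,4)] by blast
        with False have "(l, r) \<in> pieces" unfolding pieces_def by auto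
        then show ?thesis
          by (rule UN_I) (use \<open>l < t\<close> \<open>t < r\<close> in simp)
      qed
    qed
  qed
  show ?thesis
    unfolding pieces_cover
    by (rule continuous_on_closed_Union[OF finite_pieces closed_atLeastAtMost continuous_pieces])
qed

lemma compact_curve_image:
  assumes "pl_closed_curve \<gamma>"
  shows "compact (curve_image \<gamma>)"
  unfolding curve_image_def
  by (intro compact_continuous_image pl_closed_curve_continuous_on[OF assms] compact_Icc)

lemma support_fun_attained:
  assumes "compact S" "S \<noteq> {}"
  obtains s where "s \<in> S" "support_fun S \<nu> = s \<bullet> \<nu>"
proof -
  have "compact ((\<lambda>s. s \<bullet> \<nu>) ` S)"
    using assms(1) by (intro compact_continuous_image continuous_intros)
  then obtain s where s: "s \<in> S" "\<forall>y\<in>S. y \<bullet> \<nu> \<le> s \<bullet> \<nu>"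
    using assms(2) compact_attains_sup[of "(\<lambda>s. s \<bullet> \<nu>) ` S"] by auto
  then have "support_fun S \<nu> = s \<bullet> \<nu>"
    unfolding support_fun_def by (intro cSup_eq_maximum) auto
  with s(1) show thesis by (rule that)
qed

lemma support_fun_upper:
  assumes "bounded S" "p \<in> S"
  shows "p \<bullet> \<nu> \<le> support_fun S \<nu>"
proof -
  have "bounded ((\<lambda>s. s \<bullet> \<nu>) ` S)"
    using assms(1) by (intro bounded_linear_image bounded_linear_inner_left)
  then show ?thesis
    unfolding support_fun_def using assms(2) by (intro cSup_upper bounded_imp_bdd_above) auto
qed

lemma support_fun_translate_interior_less:
  assumes "compact C" "C \<noteq> {}" "bounded K"
    and inside: "(\<lambda>s. s + x) ` C \<subseteq> interior K" and "\<nu> \<noteq> 0"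
  shows "support_fun C \<nu> + x \<bullet> \<nu> < support_fun K \<nu>"
proof -
  obtain c where c: "c \<in> C" "support_fun C \<nu> = c \<bullet> \<nu>"
    using support_fun_attained[OF assms(1,2)] .
  obtain e where e: "e > 0" "ball (c + x) e \<subseteq> K"
    using inside c(1) mem_interior by blast
  define p where "p = (c + x) + (e / 2 / norm \<nu>) *\<^sub>R \<nu>"
  have "dist (c + x) p < e"
    unfolding p_def dist_norm using \<open>\<nu> \<noteq> 0\<close> e(1) by simp
  then have "p \<bullet> \<nu> \<le> support_fun K \<nu>"
    using e(2) support_fun_upper[OF assms(3)] by auto
  moreover have "p \<bullet> \<nu> = c \<bullet> \<nu> + x \<bullet> \<nu> + e / 2 * norm \<nu>"
    unfolding p_def using \<open>\<nu> \<noteq> 0\<close>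
    by (simp add: inner_add_left power2_norm_eq_inner[symmetric] power2_eq_square)
  moreover have "e / 2 * norm \<nu> > 0"
    using e(1) \<open>\<nu> \<noteq> 0\<close> by simp
  ultimately show ?thesis using c(2) by linarith
qed

lemma zero_in_convex_hull_not_open_halfspace:
  assumes "0 \<in> convex hull N"
  shows "\<not> (\<forall>\<nu>\<in>N. x \<bullet> \<nu> < 0)"
proof
  assume "\<forall>\<nu>\<in>N. x \<bullet> \<nu> < 0"
  then have "convex hull N \<subseteq> {\<nu>. x \<bullet> \<nu> < 0}"
    by (intro hull_minimal convex_halfspace_lt) auto
  then show False using assms by auto
qed

theorem lemma6p1:
  fixes K :: "'a::euclidean_space set" and \<gamma> :: "real \<Rightarrow> 'a" and N :: "'a set"
  assumes "convex_body K" and "smooth_boundary K"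
    and "pl_closed_curve \<gamma>"
    and "N \<subseteq> - {0}" and "0 \<in> convex hull N"
    and "\<forall>\<nu>\<in>N. support_fun K \<nu> \<le> support_fun (curve_image \<gamma>) \<nu>"
  shows "\<gamma> \<in> Pplus K"
proof -
  have "bounded K"
    using assms(1) unfolding convex_body_def by (simp add: compact_imp_bounded)
  have "compact (curve_image \<gamma>)" "curve_image \<gamma> \<noteq> {}"
    using compact_curve_image[OF assms(3)] unfolding curve_image_def by auto
  have "\<not> (\<lambda>s. s + x) ` curve_image \<gamma> \<subseteq> interior K" for x
  proof
    assume inside: "(\<lambda>s. s + x) ` curve_image \<gamma> \<subseteq> interior K"
    have "x \<bullet> \<nu> < 0" if "\<nu> \<in> N" for \<nu>
      using support_fun_translate_interior_less[OF \<open>compact _\<close> \<open>_ \<noteq> {}\<close> \<open>bounded K\<close> inside]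
        assms(4,6) that by fastforce
    then show False
      using zero_in_convex_hull_not_open_halfspace[OF assms(5)] by blast
  qed
  then show ?thesis
    unfolding Pplus_def using assms(3) by blast
qed

end
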